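(* Let $\mathfrak g=(\mathfrak g_1\xrightarrow{d}\mathfrak g_0)$ be a Lie algebra in the Loday–Pirashvili category $\mathcal{LM}$, with bracket $[\cdot,\cdot]$ (the Lie bracket on $\mathfrak g_0$ and the right action $\mathfrak g_1\otimes\mathfrak g_0\to\mathfrak g_1$). Consider the free graded Lie algebra on $\mathfrak g_0+\mathfrak g_1$ ($\mathfrak g_i$ in degree $i$), with bracket $\llbracket\cdot,\cdot\rrbracket$ and the differential induced by $d$, and let $E\mathfrak g$ be its quotient by the relations $\llbracket x,y\rrbracket=[x,y]$ for $x,y\in\mathfrak g_0$ and for $x\in\mathfrak g_1$, $y\in\mathfrak g_0$. Then $E\mathfrak g$ is a differential graded Lie algebra, and its truncation modulo terms of degree $\ge 2$, i.e. the map $(E\mathfrak g)_1\xrightarrow{d}(E\mathfrak g)_0$ with the restricted brackets $(E\mathfrak g)_0\otimes(E\mathfrak g)_0\to(E\mathfrak g)_0$ and $(E\mathfrak g)_1\otimes(E\mathfrak g)_0\to(E\mathfrak g)_1$, coincides with $\mathfrak g$ as a Lie algebra in $\mathcal{LM}$.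
   Context: Fix a field $\mathbf k$ of characteristic zero. The Loday–Pirashvili category $\mathcal{LM}$ has objects linear maps $U\xrightarrow{f}V$ of $\mathbf k$-vector spaces and morphisms commutative squares. A Lie algebra in $\mathcal{LM}$ is a map $M\xrightarrow{f}\mathfrak g$ where $\mathfrak g$ is a Lie algebra, $M$ is a right $\mathfrak g$-module, and $f$ is a morphism of right $\mathfrak g$-modules ($\mathfrak g$ acting on itself by the right adjoint action). *)

theory Defs
  imports Complex_Main "HOL-Library.Poly_Mapping"
begin

definition bilinear_map ::
  "('k::field \<Rightarrow> 'a::ab_group_add \<Rightarrow> 'a) \<Rightarrow> ('k \<Rightarrow> 'b::ab_group_add \<Rightarrow> 'b)
   \<Rightarrow> ('k \<Rightarrow> 'c::ab_group_add \<Rightarrow> 'c) \<Rightarrow> ('a \<Rightarrow> 'b \<Rightarrow> 'c) \<Rightarrow> bool" where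
  "bilinear_map sa sb sc f \<longleftrightarrow>
     (\<forall>x. Vector_Spaces.linear sb sc (f x)) \<and> (\<forall>y. Vector_Spaces.linear sa sc (\<lambda>x. f x y))"

text \<open>A Lie algebra in LM: a map d : g1 -> g0, where g0 is a Lie algebra (bracket br),
  g1 a right g0-module (action act), and d a morphism of right g0-modules
  (g0 acting on itself by the right adjoint action).\<close>
definition LM_lie_algebra ::
  "('k::field \<Rightarrow> 'g::ab_group_add \<Rightarrow> 'g) \<Rightarrow> ('k \<Rightarrow> 'm::ab_group_add \<Rightarrow> 'm)
   \<Rightarrow> ('g \<Rightarrow> 'g \<Rightarrow> 'g) \<Rightarrow> ('m \<Rightarrow> 'g \<Rightarrow> 'm) \<Rightarrow> ('m \<Rightarrow> 'g) \<Rightarrow> bool" where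
  "LM_lie_algebra sg sm br act d \<longleftrightarrow>
     vector_space sg \<and> vector_space sm \<and>
     bilinear_map sg sg sg br \<and>
     (\<forall>x. br x x = 0) \<and>
     (\<forall>x y z. br x (br y z) + br y (br z x) + br z (br x y) = 0) \<and>
     bilinear_map sm sg sm act \<and>
     (\<forall>m x y. act m (br x y) = act (act m x) y - act (act m y) x) \<and>
     Vector_Spaces.linear sm sg d \<and>
     (\<forall>m x. d (act m x) = br (d m) x)"

text \<open>Binary trees with labelled leaves form a basis of the free magma algebra;
  elements of the algebra are finitely supported functions trees -> k.\<close>
datatype 'x ftree = Leaf 'x | Node "'x ftree" "'x ftree"

fun tdeg :: "('g + 'm) ftree \<Rightarrow> nat" where
  "tdeg (Leaf (Inl _)) = 0"
| "tdeg (Leaf (Inr _)) = 1"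
| "tdeg (Node s u) = tdeg s + tdeg u"

definition basis_el :: "'x ftree \<Rightarrow> ('x ftree \<Rightarrow>\<^sub>0 'k::comm_ring_1)" where
  "basis_el t = Poly_Mapping.single t 1"

definition mag_smult :: "'k::comm_ring_1 \<Rightarrow> ('x ftree \<Rightarrow>\<^sub>0 'k) \<Rightarrow> ('x ftree \<Rightarrow>\<^sub>0 'k)" where
  "mag_smult c p = (\<Sum>s\<in>Poly_Mapping.keys p. Poly_Mapping.single s (c * Poly_Mapping.lookup p s))"

definition mag_mult :: "('x ftree \<Rightarrow>\<^sub>0 'k::comm_ring_1) \<Rightarrow> ('x ftree \<Rightarrow>\<^sub>0 'k) \<Rightarrow> ('x ftree \<Rightarrow>\<^sub>0 'k)" where
  "mag_mult p q = (\<Sum>s\<in>Poly_Mapping.keys p. \<Sum>u\<in>Poly_Mapping.keys q. Poly_Mapping.single (Node s u) (Poly_Mapping.lookup p s * Poly_Mapping.lookup q u))"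

definition homog :: "nat \<Rightarrow> (('g + 'm) ftree \<Rightarrow>\<^sub>0 'k::comm_ring_1) set" where
  "homog n = {a. \<forall>t\<in>Poly_Mapping.keys a. tdeg t = n}"

definition hpart :: "nat \<Rightarrow> (('g + 'm) ftree \<Rightarrow>\<^sub>0 'k::comm_ring_1) \<Rightarrow> (('g + 'm) ftree \<Rightarrow>\<^sub>0 'k)" where
  "hpart n a = (\<Sum>t\<in>{t\<in>Poly_Mapping.keys a. tdeg t = n}. Poly_Mapping.single t (Poly_Mapping.lookup a t))"

inductive_set ideal_gen :: "('x ftree \<Rightarrow>\<^sub>0 'k::comm_ring_1) set \<Rightarrow> ('x ftree \<Rightarrow>\<^sub>0 'k) set"
  for R where
  gen: "r \<in> R \<Longrightarrow> r \<in> ideal_gen R"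
| zero: "0 \<in> ideal_gen R"
| add: "a \<in> ideal_gen R \<Longrightarrow> b \<in> ideal_gen R \<Longrightarrow> a + b \<in> ideal_gen R"
| smult: "a \<in> ideal_gen R \<Longrightarrow> mag_smult c a \<in> ideal_gen R"
| left: "a \<in> ideal_gen R \<Longrightarrow> mag_mult p a \<in> ideal_gen R"
| right: "a \<in> ideal_gen R \<Longrightarrow> mag_mult a p \<in> ideal_gen R"

text \<open>Linearity of the generators (free Lie algebra on the graded VECTOR space g0+g1).\<close>
definition lin_rels ::
  "('k::comm_ring_1 \<Rightarrow> 'g::ab_group_add \<Rightarrow> 'g) \<Rightarrow> ('k \<Rightarrow> 'm::ab_group_add \<Rightarrow> 'm)
   \<Rightarrow> (('g + 'm) ftree \<Rightarrow>\<^sub>0 'k) set" where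
  "lin_rels sg sm =
     {basis_el (Leaf (Inl (x + y))) - basis_el (Leaf (Inl x)) - basis_el (Leaf (Inl y)) | x y. True}
   \<union> {basis_el (Leaf (Inl (sg c x))) - mag_smult c (basis_el (Leaf (Inl x))) | c x. True}
   \<union> {basis_el (Leaf (Inr (m + n))) - basis_el (Leaf (Inr m)) - basis_el (Leaf (Inr n)) | m n. True}
   \<union> {basis_el (Leaf (Inr (sm c m))) - mag_smult c (basis_el (Leaf (Inr m))) | c m. True}"

text \<open>Graded antisymmetry and graded Jacobi (free graded Lie algebra), on basis trees.\<close>
definition glie_rels :: "(('g + 'm) ftree \<Rightarrow>\<^sub>0 'k::comm_ring_1) set" where
  "glie_rels =
     {mag_mult (basis_el s) (basis_el u)
        + mag_smult ((-1) ^ (tdeg s * tdeg u)) (mag_mult (basis_el u) (basis_el s)) | s u. True}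
   \<union> {mag_mult (basis_el s) (mag_mult (basis_el t) (basis_el u))
        - mag_mult (mag_mult (basis_el s) (basis_el t)) (basis_el u)
        - mag_smult ((-1) ^ (tdeg s * tdeg t)) (mag_mult (basis_el t) (mag_mult (basis_el s) (basis_el u)))
      | s t u. True}"

definition E_rels ::
  "('g \<Rightarrow> 'g \<Rightarrow> 'g) \<Rightarrow> ('m \<Rightarrow> 'g \<Rightarrow> 'm) \<Rightarrow> (('g + 'm) ftree \<Rightarrow>\<^sub>0 'k::comm_ring_1) set" where
  "E_rels br act =
     {mag_mult (basis_el (Leaf (Inl x))) (basis_el (Leaf (Inl y))) - basis_el (Leaf (Inl (br x y))) | x y. True}
   \<union> {mag_mult (basis_el (Leaf (Inr m))) (basis_el (Leaf (Inl y))) - basis_el (Leaf (Inr (act m y))) | m y. True}"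

definition E_ideal ::
  "('k::comm_ring_1 \<Rightarrow> 'g::ab_group_add \<Rightarrow> 'g) \<Rightarrow> ('k \<Rightarrow> 'm::ab_group_add \<Rightarrow> 'm)
   \<Rightarrow> ('g \<Rightarrow> 'g \<Rightarrow> 'g) \<Rightarrow> ('m \<Rightarrow> 'g \<Rightarrow> 'm) \<Rightarrow> (('g + 'm) ftree \<Rightarrow>\<^sub>0 'k) set" where
  "E_ideal sg sm br act = ideal_gen (lin_rels sg sm \<union> glie_rels \<union> E_rels br act)"

fun Dtree :: "('m \<Rightarrow> 'g) \<Rightarrow> ('g + 'm) ftree \<Rightarrow> (('g + 'm) ftree \<Rightarrow>\<^sub>0 'k::comm_ring_1)" where
  "Dtree d (Leaf (Inl x)) = 0"
| "Dtree d (Leaf (Inr m)) = basis_el (Leaf (Inl (d m)))"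
| "Dtree d (Node s u) = mag_mult (Dtree d s) (basis_el u)
      + mag_smult ((-1) ^ tdeg s) (mag_mult (basis_el s) (Dtree d u))"

definition Dmag :: "('m \<Rightarrow> 'g) \<Rightarrow> (('g + 'm) ftree \<Rightarrow>\<^sub>0 'k::comm_ring_1) \<Rightarrow> (('g + 'm) ftree \<Rightarrow>\<^sub>0 'k)" where
  "Dmag d p = (\<Sum>s\<in>Poly_Mapping.keys p. mag_smult (Poly_Mapping.lookup p s) (Dtree d s))"

end

theory Submission
  imports Defs
begin

text \<open>
  A tree of degree 0 (resp. 1) is congruent modulo the defining ideal to a single letter, namely
  the one obtained by evaluating the tree with the bracket of \<open>g\<^sub>0\<close> and the action
  on \<open>g\<^sub>1\<close>; so the letters exhaust \<open>(E g)\<^sub>0\<close> and \<open>(E g)\<^sub>1\<close>.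
  Extended linearly, the same evaluation is a morphism from the free algebra onto the graded Lie
  algebra \<open>g\<^sub>0 \<oplus> g\<^sub>1\<close> (with \<open>[g\<^sub>1, g\<^sub>1] = 0\<close> and nothing in degree \<open>\<ge> 2\<close>),
  which kills every defining relation; this gives injectivity.
  The differential \<open>D\<close> is a derivation of degree \<open>-1\<close>: by the graded Leibniz rule it maps a
  graded antisymmetry or Jacobi relation to a combination of such relations, and it maps the
  relations for \<open>[x, y]\<close> and \<open>[m, y]\<close> to \<open>0\<close> and to the relation for \<open>[d m, y]\<close>, by
  equivariance of \<open>d\<close>. Already in the free algebra \<open>D\<^sup>2 = 0\<close>.
\<close>

lemma lookup_sum_single:
  fixes f :: "'a \<Rightarrow> 'b::comm_monoid_add"
  shows "finite A \<Longrightarrow>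
    Poly_Mapping.lookup (\<Sum>t\<in>A. Poly_Mapping.single t (f t)) x = (if x \<in> A then f x else 0)"
  by (induction A rule: finite_induct) (auto simp: lookup_add lookup_single when_def)

lemma poly_mapping_keys_induct [consumes 1, case_names zero single add]:
  fixes p :: "'a \<Rightarrow>\<^sub>0 'b::comm_monoid_add"
  assumes "Poly_Mapping.keys p \<subseteq> S"
    and "P 0"
    and "\<And>s c. s \<in> S \<Longrightarrow> P (Poly_Mapping.single s c)"
    and "\<And>a b. P a \<Longrightarrow> P b \<Longrightarrow> P (a + b)"
  shows "P p"
proof -
  have "P (\<Sum>s\<in>I. Poly_Mapping.single s (Poly_Mapping.lookup p s))"
    if "I \<subseteq> Poly_Mapping.keys p" for I
    using finite_subset[OF that finite_keys] that
    by (induction I rule: finite_induct) (use assms in auto)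
  moreover have "p = (\<Sum>s\<in>Poly_Mapping.keys p. Poly_Mapping.single s (Poly_Mapping.lookup p s))"
    by (rule poly_mapping_eqI) (auto simp: lookup_sum_single in_keys_iff)
  ultimately show ?thesis by (metis order_refl)
qed

lemma poly_mapping_induct [case_names zero single add]:
  fixes p :: "'a \<Rightarrow>\<^sub>0 'b::comm_monoid_add"
  assumes "P 0" "\<And>s c. P (Poly_Mapping.single s c)" "\<And>a b. P a \<Longrightarrow> P b \<Longrightarrow> P (a + b)"
  shows "P p"
  using subset_UNIV by (rule poly_mapping_keys_induct) (use assms in auto)

lemma lookup_mag_smult [simp]:
  "Poly_Mapping.lookup (mag_smult c p) t = c * Poly_Mapping.lookup p t"
  unfolding mag_smult_def by (simp add: lookup_sum_single in_keys_iff)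

lemma lookup_basis_el: "Poly_Mapping.lookup (basis_el s) t = (if s = t then 1 else 0)"
  unfolding basis_el_def by (simp add: lookup_single)

lemma lookup_mag_mult_Node [simp]:
  "Poly_Mapping.lookup (mag_mult p q) (Node s u) =
     Poly_Mapping.lookup p s * Poly_Mapping.lookup q u"
proof -
  have "Poly_Mapping.lookup (mag_mult p q) (Node s u) =
      (\<Sum>s'\<in>Poly_Mapping.keys p. if s' = s then
         (\<Sum>u'\<in>Poly_Mapping.keys q.
            if u' = u then Poly_Mapping.lookup p s * Poly_Mapping.lookup q u else 0)
       else 0)"
    unfolding mag_mult_def lookup_sum by (intro sum.cong refl) (auto simp: lookup_single when_def)
  also have "\<dots> = Poly_Mapping.lookup p s * Poly_Mapping.lookup q u"
    by (simp add: in_keys_iff)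
  finally show ?thesis .
qed

lemma lookup_mag_mult_Leaf [simp]: "Poly_Mapping.lookup (mag_mult p q) (Leaf x) = 0"
  unfolding mag_mult_def lookup_sum by (simp add: lookup_single)

lemma lookup_hpart [simp]:
  "Poly_Mapping.lookup (hpart n a) t = (if tdeg t = n then Poly_Mapping.lookup a t else 0)"
  unfolding hpart_def by (simp add: lookup_sum_single in_keys_iff)

interpretation mag: module "mag_smult :: 'k::comm_ring_1 \<Rightarrow> ('x ftree \<Rightarrow>\<^sub>0 'k) \<Rightarrow> _"
  by unfold_locales (auto intro!: poly_mapping_eqI simp: lookup_add algebra_simps)

lemma single_eq_mag_smult_basis_el: "Poly_Mapping.single s c = mag_smult c (basis_el s)"
  by (rule poly_mapping_eqI) (simp add: lookup_basis_el lookup_single when_def)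

lemma lookup_mag_mult:
  "Poly_Mapping.lookup (mag_mult p q) t =
     (case t of Leaf _ \<Rightarrow> 0 | Node s u \<Rightarrow> Poly_Mapping.lookup p s * Poly_Mapping.lookup q u)"
  by (cases t) simp_all

lemma mag_mult_basis_el: "mag_mult (basis_el s) (basis_el u) = basis_el (Node s u)"
  by (rule poly_mapping_eqI) (simp add: lookup_mag_mult lookup_basis_el split: ftree.split)

lemma mag_mult_add_left: "mag_mult (p + q) r = mag_mult p r + mag_mult q r"
  and mag_mult_add_right: "mag_mult r (p + q) = mag_mult r p + mag_mult r q"
  and mag_mult_diff_left: "mag_mult (p - q) r = mag_mult p r - mag_mult q r"
  and mag_mult_diff_right: "mag_mult r (p - q) = mag_mult r p - mag_mult r q"
  and mag_mult_minus_left: "mag_mult (- p) r = - mag_mult p r"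
  and mag_mult_smult_left: "mag_mult (mag_smult c p) r = mag_smult c (mag_mult p r)"
  and mag_mult_smult_right: "mag_mult r (mag_smult c p) = mag_smult c (mag_mult r p)"
  by (rule poly_mapping_eqI;
      simp add: lookup_mag_mult lookup_add lookup_minus algebra_simps split: ftree.split)+

lemma mag_mult_zero [simp]: "mag_mult 0 r = 0" "mag_mult r 0 = 0"
  by (rule poly_mapping_eqI; simp add: lookup_mag_mult split: ftree.split)+

lemma homog_iff: "a \<in> homog n \<longleftrightarrow> (\<forall>t. tdeg t \<noteq> n \<longrightarrow> Poly_Mapping.lookup a t = 0)"
  unfolding homog_def by (auto simp: in_keys_iff)

lemma homog_induct [consumes 1, case_names zero single add]:
  assumes "a \<in> homog n"
    and "P 0"
    and "\<And>s c. tdeg s = n \<Longrightarrow> P (Poly_Mapping.single s c)"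
    and "\<And>a b. P a \<Longrightarrow> P b \<Longrightarrow> P (a + b)"
  shows "P a"
  by (rule poly_mapping_keys_induct[of a "{t. tdeg t = n}" P]) (use assms in \<open>auto simp: homog_def\<close>)

lemma homog_zero: "0 \<in> homog n"
  and homog_add: "a \<in> homog n \<Longrightarrow> b \<in> homog n \<Longrightarrow> a + b \<in> homog n"
  and homog_diff: "a \<in> homog n \<Longrightarrow> b \<in> homog n \<Longrightarrow> a - b \<in> homog n"
  and homog_smult: "a \<in> homog n \<Longrightarrow> mag_smult c a \<in> homog n"
  and homog_basis_el: "basis_el t \<in> homog (tdeg t)"
  by (simp_all add: homog_iff lookup_add lookup_minus lookup_basis_el)

lemma homog_mag_mult: "a \<in> homog n \<Longrightarrow> b \<in> homog m \<Longrightarrow> mag_mult a b \<in> homog (n + m)"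
  unfolding homog_iff lookup_mag_mult
  by (auto split: ftree.split) (metis mult_zero_left mult_zero_right)

lemma hpart_homog: "a \<in> homog k \<Longrightarrow> hpart n a = (if n = k then a else 0)"
  by (rule poly_mapping_eqI) (auto simp: homog_iff)

lemma ideal_gen_diff: "a \<in> ideal_gen R \<Longrightarrow> b \<in> ideal_gen R \<Longrightarrow> a - b \<in> ideal_gen R"
  using ideal_gen.add[OF _ ideal_gen.smult[of b R "-1"]] by simp

lemma ideal_gen_sum: "(\<And>x. x \<in> A \<Longrightarrow> f x \<in> ideal_gen R) \<Longrightarrow> sum f A \<in> ideal_gen R"
  by (induction A rule: infinite_finite_induct) (auto intro: ideal_gen.intros)

lemma ideal_gen_mag_mult_cong:
  assumes "a - a' \<in> ideal_gen R" "b - b' \<in> ideal_gen R"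
  shows "mag_mult a b - mag_mult a' b' \<in> ideal_gen R"
proof -
  have "mag_mult a b - mag_mult a' b' = mag_mult (a - a') b + mag_mult a' (b - b')"
    by (simp add: mag_mult_diff_left mag_mult_diff_right)
  then show ?thesis using assms by (simp add: ideal_gen.add ideal_gen.left ideal_gen.right)
qed

lemma ideal_gen_representative:
  fixes rep :: "'v::ab_group_add \<Rightarrow> ('x ftree \<Rightarrow>\<^sub>0 'k::comm_ring_1)"
  assumes rep_add: "\<And>x y. rep (x + y) - rep x - rep y \<in> ideal_gen R"
    and rep_scale: "\<And>c x. rep (scale c x) - mag_smult c (rep x) \<in> ideal_gen R"
    and keys: "\<And>t. t \<in> Poly_Mapping.keys a \<Longrightarrow> \<exists>x. basis_el t - rep x \<in> ideal_gen R"
  shows "\<exists>x. a - rep x \<in> ideal_gen R"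
  using order_refl
proof (induction rule: poly_mapping_keys_induct)
  case zero
  have "rep 0 \<in> ideal_gen R"
    using ideal_gen.smult[OF rep_add[of 0 0], of "-1"] by simp
  then have "0 - rep 0 \<in> ideal_gen R"
    using ideal_gen_diff[OF ideal_gen.zero] by blast
  then show ?case by blast
next
  case (single s c)
  then obtain x where x: "basis_el s - rep x \<in> ideal_gen R" using keys by blast
  have "Poly_Mapping.single s c - rep (scale c x) =
      mag_smult c (basis_el s - rep x) - (rep (scale c x) - mag_smult c (rep x))"
    by (simp add: single_eq_mag_smult_basis_el mag.scale_right_diff_distrib)
  also have "\<dots> \<in> ideal_gen R"
    by (rule ideal_gen_diff[OF ideal_gen.smult[OF x] rep_scale])
  finally show ?case by blast
next
  case (add p q)
  then obtain x y where "p - rep x \<in> ideal_gen R" "q - rep y \<in> ideal_gen R" by blast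
  then have "(p - rep x) + (q - rep y) - (rep (x + y) - rep x - rep y) \<in> ideal_gen R"
    by (intro ideal_gen_diff[OF ideal_gen.add rep_add])
  then have "p + q - rep (x + y) \<in> ideal_gen R" by (simp add: algebra_simps)
  then show ?case by blast
qed

lemma hpart_zero [simp]: "hpart n 0 = 0"
  and hpart_add: "hpart n (a + b) = hpart n a + hpart n b"
  and hpart_smult: "hpart n (mag_smult c a) = mag_smult c (hpart n a)"
  by (rule poly_mapping_eqI; simp add: lookup_add)+

lemma hpart_mag_mult: "hpart n (mag_mult p q) = (\<Sum>j\<le>n. mag_mult (hpart (n - j) p) (hpart j q))"
proof (rule poly_mapping_eqI)
  fix t
  show "Poly_Mapping.lookup (hpart n (mag_mult p q)) t =
        Poly_Mapping.lookup (\<Sum>j\<le>n. mag_mult (hpart (n - j) p) (hpart j q)) t"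
  proof (cases t)
    case (Node s u)
    have "Poly_Mapping.lookup (\<Sum>j\<le>n. mag_mult (hpart (n - j) p) (hpart j q)) t =
      (\<Sum>j\<le>n. if j = tdeg u then (if tdeg s + tdeg u = n
                 then Poly_Mapping.lookup p s * Poly_Mapping.lookup q u else 0) else 0)"
      unfolding lookup_sum Node by (rule sum.cong) auto
    then show ?thesis by (simp add: Node)
  qed (simp add: lookup_sum)
qed

lemma ideal_gen_hpart:
  assumes "\<And>r. r \<in> R \<Longrightarrow> \<exists>k. r \<in> homog k"
  shows "a \<in> ideal_gen R \<Longrightarrow> hpart n a \<in> ideal_gen R"
proof (induction arbitrary: n rule: ideal_gen.induct)
  case (gen r)
  then show ?case using assms by (metis hpart_homog ideal_gen.gen ideal_gen.zero)
next
  case (left a p)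
  then show ?case by (auto simp: hpart_mag_mult intro!: ideal_gen_sum ideal_gen.left)
next
  case (right a p)
  then show ?case by (auto simp: hpart_mag_mult intro!: ideal_gen_sum ideal_gen.right)
qed (auto simp: hpart_add hpart_smult intro: ideal_gen.intros)

section \<open>The grading involution\<close>

definition grading_inv :: "(('g + 'm) ftree \<Rightarrow>\<^sub>0 'k::comm_ring_1) \<Rightarrow> (('g + 'm) ftree \<Rightarrow>\<^sub>0 'k)" where
  "grading_inv = Poly_Mapping.mapp (\<lambda>t c. (-1) ^ tdeg t * c)"

lemma lookup_grading_inv [simp]:
  "Poly_Mapping.lookup (grading_inv p) t = (-1) ^ tdeg t * Poly_Mapping.lookup p t"
  by (simp add: grading_inv_def lookup_mapp when_def in_keys_iff)

lemma grading_inv_zero [simp]: "grading_inv 0 = 0"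
  and grading_inv_add: "grading_inv (p + q) = grading_inv p + grading_inv q"
  and grading_inv_smult: "grading_inv (mag_smult c p) = mag_smult c (grading_inv p)"
  and grading_inv_mag_mult: "grading_inv (mag_mult p q) = mag_mult (grading_inv p) (grading_inv q)"
  by (rule poly_mapping_eqI;
      simp add: lookup_add lookup_mag_mult power_add algebra_simps split: ftree.split)+

lemma grading_inv_homog: "a \<in> homog n \<Longrightarrow> grading_inv a = mag_smult ((-1) ^ n) a"
  by (rule poly_mapping_eqI) (metis homog_iff lookup_grading_inv lookup_mag_smult mult_zero_right)

lemma grading_inv_basis_el: "grading_inv (basis_el s) = mag_smult ((-1) ^ tdeg s) (basis_el s)"
  by (rule grading_inv_homog[OF homog_basis_el])

lemma ideal_gen_grading_inv:
  assumes "\<And>r. r \<in> R \<Longrightarrow> \<exists>k. r \<in> homog k"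
  shows "a \<in> ideal_gen R \<Longrightarrow> grading_inv a \<in> ideal_gen R"
proof (induction rule: ideal_gen.induct)
  case (gen r)
  then show ?case using assms by (metis grading_inv_homog ideal_gen.gen ideal_gen.smult)
qed (auto simp: grading_inv_add grading_inv_smult grading_inv_mag_mult intro: ideal_gen.intros)

section \<open>Linear extension and the derivation \<open>D\<close>\<close>

definition lin_ext :: "('k::comm_ring_1 \<Rightarrow> 'v::ab_group_add \<Rightarrow> 'v) \<Rightarrow> ('x ftree \<Rightarrow> 'v)
    \<Rightarrow> ('x ftree \<Rightarrow>\<^sub>0 'k) \<Rightarrow> 'v" where
  "lin_ext scale f p = (\<Sum>s\<in>Poly_Mapping.keys p. scale (Poly_Mapping.lookup p s) (f s))"

context module
begin

lemma lin_ext_eq_sum: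
  "finite S \<Longrightarrow> Poly_Mapping.keys p \<subseteq> S \<Longrightarrow>
    lin_ext scale f p = (\<Sum>s\<in>S. scale (Poly_Mapping.lookup p s) (f s))"
  unfolding lin_ext_def by (rule sum.mono_neutral_left) (auto simp: in_keys_iff)

lemma module_hom_lin_ext:
  fixes f :: "'x ftree \<Rightarrow> 'b"
  shows "module_hom mag_smult scale (lin_ext scale f)"
proof unfold_locales
  fix p q :: "'x ftree \<Rightarrow>\<^sub>0 'a"
  have "Poly_Mapping.keys (p + q) \<subseteq> Poly_Mapping.keys p \<union> Poly_Mapping.keys q"
    by (rule keys_add)
  then show "lin_ext scale f (p + q) = lin_ext scale f p + lin_ext scale f q"
    by (simp add: lin_ext_eq_sum[of "Poly_Mapping.keys p \<union> Poly_Mapping.keys q"]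
        lookup_add scale_left_distrib sum.distrib)
next
  fix c and p :: "'x ftree \<Rightarrow>\<^sub>0 'a"
  have "Poly_Mapping.keys (mag_smult c p) \<subseteq> Poly_Mapping.keys p"
    by (auto simp: in_keys_iff)
  then show "lin_ext scale f (mag_smult c p) = scale c (lin_ext scale f p)"
    by (simp add: lin_ext_eq_sum[of "Poly_Mapping.keys p"] scale_sum_right)
qed

lemma lin_ext_basis_el [simp]: "lin_ext scale f (basis_el s) = f s"
  by (subst lin_ext_eq_sum[of "{s}"]) (auto simp: lookup_basis_el in_keys_iff split: if_splits)

end

lemma Dmag_eq_lin_ext: "Dmag d = lin_ext mag_smult (Dtree d)"
  by (simp add: fun_eq_iff Dmag_def lin_ext_def)

lemma Dmag_hom: "module_hom mag_smult mag_smult (Dmag d)"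
  unfolding Dmag_eq_lin_ext by (rule mag.module_hom_lin_ext)

lemmas Dmag_zero [simp] = module_hom.zero[OF Dmag_hom]
  and Dmag_add = module_hom.add[OF Dmag_hom]
  and Dmag_diff = module_hom.diff[OF Dmag_hom]
  and Dmag_smult = module_hom.scale[OF Dmag_hom]

lemma Dmag_basis_el [simp]: "Dmag d (basis_el s) = Dtree d s"
  unfolding Dmag_eq_lin_ext by (rule mag.lin_ext_basis_el)

lemma Dmag_mag_mult:
  "Dmag d (mag_mult p q) = mag_mult (Dmag d p) q + mag_mult (grading_inv p) (Dmag d q)"
proof (induction p rule: poly_mapping_induct)
  case (single s c)
  show ?case
  proof (induction q rule: poly_mapping_induct)
    case (single u e)
    show ?case
      by (simp add: single_eq_mag_smult_basis_el grading_inv_basis_el mag_mult_smult_left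
          mag_mult_smult_right Dmag_smult mag_mult_basis_el grading_inv_smult
          mag.scale_right_distrib mult_ac)
  qed (simp_all add: mag_mult_add_right Dmag_add)
qed (simp_all add: mag_mult_add_left Dmag_add grading_inv_add)

lemma Dtree_tdeg_0: "tdeg t = 0 \<Longrightarrow> Dtree d t = 0"
  by (induction t rule: Dtree.induct) simp_all

lemma Dtree_homog: "(Dtree d t :: ('g + 'm) ftree \<Rightarrow>\<^sub>0 'k::comm_ring_1) \<in> homog (tdeg t - 1)"
proof (induction t rule: Dtree.induct)
  case (3 d s u)
  have "mag_mult (Dtree d s) (basis_el u :: _ \<Rightarrow>\<^sub>0 'k) \<in> homog (tdeg (Node s u) - 1)"
  proof (cases "tdeg s = 0")
    case False
    then obtain k where "tdeg s = Suc k" using not0_implies_Suc by blast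
    then show ?thesis using homog_mag_mult[OF "3.IH"(1) homog_basis_el[of u]] by simp
  qed (simp add: Dtree_tdeg_0 homog_zero)
  moreover have "mag_mult (basis_el s :: _ \<Rightarrow>\<^sub>0 'k) (Dtree d u) \<in> homog (tdeg (Node s u) - 1)"
  proof (cases "tdeg u = 0")
    case False
    then obtain k where "tdeg u = Suc k" using not0_implies_Suc by blast
    then show ?thesis using homog_mag_mult[OF homog_basis_el[of s] "3.IH"(2)] by simp
  qed (simp add: Dtree_tdeg_0 homog_zero)
  ultimately show ?case by (simp add: homog_add homog_smult)
qed (simp_all add: homog_zero homog_basis_el[of "Leaf (Inl _)", simplified])

lemma Dmag_homog: "a \<in> homog n \<Longrightarrow> Dmag d a \<in> homog (n - 1)"
proof (induction rule: homog_induct)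
  case (single s c)
  then show ?case
    using homog_smult[OF Dtree_homog, of c d s]
    by (simp add: single_eq_mag_smult_basis_el Dmag_smult)
qed (simp_all add: Dmag_add homog_zero homog_add)

lemma Dmag_homog_0: "a \<in> homog 0 \<Longrightarrow> Dmag d a = 0"
  by (induction rule: homog_induct)
     (simp_all add: single_eq_mag_smult_basis_el Dmag_smult Dmag_add Dtree_tdeg_0)

lemma grading_inv_Dtree: "grading_inv (Dtree d t) = - mag_smult ((-1) ^ tdeg t) (Dtree d t)"
proof (cases "tdeg t")
  case (Suc k)
  then show ?thesis
    using grading_inv_homog[OF Dtree_homog[of d t]] by (simp flip: mag.scale_minus_left)
qed (simp add: Dtree_tdeg_0)

lemma Dmag_Dtree: "Dmag d (Dtree d t) = 0"
proof (induction t rule: Dtree.induct)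
  case (3 d s u)
  then show ?case
    by (simp add: Dmag_add Dmag_smult Dmag_mag_mult grading_inv_Dtree
        mag_mult_minus_left mag_mult_smult_left)
qed simp_all

lemma Dmag_Dmag: "Dmag d (Dmag d p) = 0"
  by (induction p rule: poly_mapping_induct)
     (simp_all add: single_eq_mag_smult_basis_el Dmag_smult Dmag_add Dmag_Dtree)

section \<open>Graded antisymmetry and Jacobi relations\<close>

definition antisym_rel :: "nat \<Rightarrow> nat \<Rightarrow> ('x ftree \<Rightarrow>\<^sub>0 'k::comm_ring_1) \<Rightarrow> ('x ftree \<Rightarrow>\<^sub>0 'k)
    \<Rightarrow> ('x ftree \<Rightarrow>\<^sub>0 'k)" where
  "antisym_rel a b p q = mag_mult p q + mag_smult ((-1) ^ (a * b)) (mag_mult q p)"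

definition jacobi_rel :: "nat \<Rightarrow> nat \<Rightarrow> ('x ftree \<Rightarrow>\<^sub>0 'k::comm_ring_1) \<Rightarrow> ('x ftree \<Rightarrow>\<^sub>0 'k)
    \<Rightarrow> ('x ftree \<Rightarrow>\<^sub>0 'k) \<Rightarrow> ('x ftree \<Rightarrow>\<^sub>0 'k)" where
  "jacobi_rel a b p q r = mag_mult p (mag_mult q r) - mag_mult (mag_mult p q) r
     - mag_smult ((-1) ^ (a * b)) (mag_mult q (mag_mult p r))"

lemma glie_rels_eq:
  "glie_rels =
     {antisym_rel (tdeg s) (tdeg u) (basis_el s) (basis_el u) | s u. True}
   \<union> {jacobi_rel (tdeg s) (tdeg t) (basis_el s) (basis_el t) (basis_el u) | s t u. True}"
  by (simp add: glie_rels_def antisym_rel_def jacobi_rel_def)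

lemma antisym_rel_zero [simp]: "antisym_rel a b 0 q = 0" "antisym_rel a b p 0 = 0"
  and antisym_rel_add_left:
    "antisym_rel a b (p + p') q = antisym_rel a b p q + antisym_rel a b p' q"
  and antisym_rel_add_right:
    "antisym_rel a b p (q + q') = antisym_rel a b p q + antisym_rel a b p q'"
  and antisym_rel_smult_left:
    "antisym_rel a b (mag_smult c p) q = mag_smult c (antisym_rel a b p q)"
  and antisym_rel_smult_right:
    "antisym_rel a b p (mag_smult c q) = mag_smult c (antisym_rel a b p q)"
  by (simp_all add: antisym_rel_def mag_mult_add_left mag_mult_add_right mag_mult_smult_left
      mag_mult_smult_right mag.scale_right_distrib mult.commute)

lemma jacobi_rel_zero [simp]:
    "jacobi_rel a b 0 q r = 0" "jacobi_rel a b p 0 r = 0" "jacobi_rel a b p q 0 = 0"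
  and jacobi_rel_add_1: "jacobi_rel a b (p + p') q r = jacobi_rel a b p q r + jacobi_rel a b p' q r"
  and jacobi_rel_add_2: "jacobi_rel a b p (q + q') r = jacobi_rel a b p q r + jacobi_rel a b p q' r"
  and jacobi_rel_add_3: "jacobi_rel a b p q (r + r') = jacobi_rel a b p q r + jacobi_rel a b p q r'"
  and jacobi_rel_smult_1: "jacobi_rel a b (mag_smult c p) q r = mag_smult c (jacobi_rel a b p q r)"
  and jacobi_rel_smult_2: "jacobi_rel a b p (mag_smult c q) r = mag_smult c (jacobi_rel a b p q r)"
  and jacobi_rel_smult_3: "jacobi_rel a b p q (mag_smult c r) = mag_smult c (jacobi_rel a b p q r)"
  by (simp_all add: jacobi_rel_def mag_mult_add_left mag_mult_add_right mag_mult_smult_left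
      mag_mult_smult_right mag.scale_right_distrib mag.scale_right_diff_distrib mult.commute)

lemma antisym_rel_in_ideal_gen:
  assumes "glie_rels \<subseteq> R" "p \<in> homog a" "q \<in> homog b"
  shows "antisym_rel a b p q \<in> ideal_gen R"
  using assms(2)
proof (induction rule: homog_induct)
  case (single s c)
  note deg_s = this
  from assms(3) show ?case
  proof (induction rule: homog_induct)
    case (single u e)
    have "antisym_rel (tdeg s) (tdeg u) (basis_el s) (basis_el u) \<in> glie_rels"
      unfolding glie_rels_eq by blast
    then have "antisym_rel a b (basis_el s) (basis_el u) \<in> ideal_gen R"
      using assms(1) deg_s single by (auto intro: ideal_gen.gen)
    then show ?case
      by (simp add: single_eq_mag_smult_basis_el antisym_rel_smult_left antisym_rel_smult_right
          ideal_gen.smult)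
  qed (simp_all add: antisym_rel_add_right ideal_gen.intros)
qed (simp_all add: antisym_rel_add_left ideal_gen.intros)

lemma jacobi_rel_in_ideal_gen:
  assumes "glie_rels \<subseteq> R" "p \<in> homog a" "q \<in> homog b"
  shows "jacobi_rel a b p q r \<in> ideal_gen R"
  using assms(2)
proof (induction rule: homog_induct)
  case (single s c)
  note deg_s = this
  from assms(3) show ?case
  proof (induction rule: homog_induct)
    case (single t e)
    note deg_t = this
    show ?case
    proof (induction r rule: poly_mapping_induct)
      case (single u f)
      have "jacobi_rel (tdeg s) (tdeg t) (basis_el s) (basis_el t) (basis_el u) \<in> glie_rels"
        unfolding glie_rels_eq by blast
      then have "jacobi_rel a b (basis_el s) (basis_el t) (basis_el u) \<in> ideal_gen R"
        using assms(1) deg_s deg_t by (auto intro: ideal_gen.gen)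
      then show ?case
        by (simp add: single_eq_mag_smult_basis_el jacobi_rel_smult_1 jacobi_rel_smult_2
            jacobi_rel_smult_3 ideal_gen.smult)
    qed (simp_all add: jacobi_rel_add_3 ideal_gen.intros)
  qed (simp_all add: jacobi_rel_add_2 ideal_gen.intros)
qed (simp_all add: jacobi_rel_add_1 ideal_gen.intros)

text \<open>\<open>a - 1\<close> is truncated at \<open>a = 0\<close>, where the hypothesis makes both sides vanish.\<close>

lemma mag_smult_sign_pred:
  fixes x :: "'x ftree \<Rightarrow>\<^sub>0 'k::comm_ring_1"
  assumes "a = 0 \<Longrightarrow> x = 0"
  shows "mag_smult ((-1) ^ ((a - 1) * b)) x = mag_smult ((-1) ^ (a * b) * (-1) ^ b) x"
proof (cases a)
  case (Suc a')
  have "(-1) ^ (a' * b) = (-1) ^ (b + a' * b) * ((-1) ^ b :: 'k)"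
    by (simp add: power_add mult_ac)
  then show ?thesis using Suc by simp
qed (use assms in simp)

lemma Dmag_antisym_rel:
  assumes p: "p \<in> homog a" and q: "q \<in> homog b"
  shows "Dmag d (antisym_rel a b p q) =
    antisym_rel (a - 1) b (Dmag d p) q + mag_smult ((-1) ^ a) (antisym_rel a (b - 1) p (Dmag d q))"
proof -
  have sp: "mag_smult ((-1) ^ ((a - 1) * b)) (mag_mult q (Dmag d p)) =
      mag_smult ((-1) ^ (a * b) * (-1) ^ b) (mag_mult q (Dmag d p))"
    using Dmag_homog_0[of p d] p by (intro mag_smult_sign_pred) auto
  have sq: "mag_smult ((-1) ^ (a * (b - 1))) (mag_mult (Dmag d q) p) =
      mag_smult ((-1) ^ (a * b) * (-1) ^ a) (mag_mult (Dmag d q) p)"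
  proof -
    have "mag_smult ((-1) ^ ((b - 1) * a)) (mag_mult (Dmag d q) p) =
        mag_smult ((-1) ^ (b * a) * (-1) ^ a) (mag_mult (Dmag d q) p)"
      using Dmag_homog_0[of q d] q by (intro mag_smult_sign_pred) auto
    then show ?thesis by (simp add: mult.commute)
  qed
  show ?thesis
    unfolding antisym_rel_def sp sq
    by (simp add: Dmag_add Dmag_smult Dmag_mag_mult grading_inv_homog[OF p]
        grading_inv_homog[OF q] mag_mult_smult_left mag_mult_smult_right
        mag.scale_right_distrib mult_ac)
qed

lemma Dmag_jacobi_rel:
  assumes p: "p \<in> homog a" and q: "q \<in> homog b"
  shows "Dmag d (jacobi_rel a b p q r) =
    jacobi_rel (a - 1) b (Dmag d p) q r + mag_smult ((-1) ^ a) (jacobi_rel a (b - 1) p (Dmag d q) r)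
    + mag_smult ((-1) ^ (a + b)) (jacobi_rel a b p q (Dmag d r))"
proof -
  have sp: "mag_smult ((-1) ^ ((a - 1) * b)) (mag_mult q (mag_mult (Dmag d p) r)) =
      mag_smult ((-1) ^ (a * b) * (-1) ^ b) (mag_mult q (mag_mult (Dmag d p) r))"
    using Dmag_homog_0[of p d] p by (intro mag_smult_sign_pred) auto
  have sq: "mag_smult ((-1) ^ (a * (b - 1))) (mag_mult (Dmag d q) (mag_mult p r)) =
      mag_smult ((-1) ^ (a * b) * (-1) ^ a) (mag_mult (Dmag d q) (mag_mult p r))"
  proof -
    have "mag_smult ((-1) ^ ((b - 1) * a)) (mag_mult (Dmag d q) (mag_mult p r)) =
        mag_smult ((-1) ^ (b * a) * (-1) ^ a) (mag_mult (Dmag d q) (mag_mult p r))"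
      using Dmag_homog_0[of q d] q by (intro mag_smult_sign_pred) auto
    then show ?thesis by (simp add: mult.commute)
  qed
  show ?thesis
    unfolding jacobi_rel_def sp sq
    by (simp add: Dmag_add Dmag_diff Dmag_smult Dmag_mag_mult grading_inv_mag_mult
        grading_inv_homog[OF p] grading_inv_homog[OF q] mag_mult_add_left mag_mult_add_right
        mag_mult_smult_left mag_mult_smult_right mag.scale_right_distrib
        mag.scale_right_diff_distrib power_add algebra_simps)
qed

lemma Dmag_glie_rels:
  assumes "glie_rels \<subseteq> R" "r \<in> glie_rels"
  shows "Dmag d r \<in> ideal_gen R"
proof -
  have "Dmag d (antisym_rel (tdeg s) (tdeg u) (basis_el s) (basis_el u)) \<in> ideal_gen R" for s u
    unfolding Dmag_antisym_rel[OF homog_basis_el homog_basis_el]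
    by (intro ideal_gen.add ideal_gen.smult antisym_rel_in_ideal_gen assms(1) Dmag_homog
        homog_basis_el)
  moreover have "Dmag d (jacobi_rel (tdeg s) (tdeg t) (basis_el s) (basis_el t) (basis_el u))
      \<in> ideal_gen R" for s t u
    unfolding Dmag_jacobi_rel[OF homog_basis_el homog_basis_el]
    by (intro ideal_gen.add ideal_gen.smult jacobi_rel_in_ideal_gen assms(1) Dmag_homog
        homog_basis_el)
  ultimately show ?thesis using assms(2) by (auto simp: glie_rels_eq)
qed

lemma homog_antisym_rel: "p \<in> homog a \<Longrightarrow> q \<in> homog b \<Longrightarrow> antisym_rel a b p q \<in> homog (a + b)"
  unfolding antisym_rel_def
  by (metis add.commute homog_add homog_mag_mult homog_smult)

lemma homog_jacobi_rel:
  "p \<in> homog a \<Longrightarrow> q \<in> homog b \<Longrightarrow> r \<in> homog c \<Longrightarrow> jacobi_rel a b p q r \<in> homog (a + b + c)"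
  unfolding jacobi_rel_def
  by (intro homog_diff homog_smult; metis add.assoc add.left_commute homog_mag_mult)

lemma homog_letter: "basis_el (Leaf (Inl x)) \<in> homog 0" "basis_el (Leaf (Inr m)) \<in> homog 1"
  using homog_basis_el[of "Leaf (Inl x)"] homog_basis_el[of "Leaf (Inr m)"] by simp_all

lemma homog_letter_mult:
  "mag_mult (basis_el (Leaf (Inl x))) (basis_el (Leaf (Inl y))) \<in> homog 0"
  "mag_mult (basis_el (Leaf (Inr m))) (basis_el (Leaf (Inl y))) \<in> homog 1"
  using homog_mag_mult[OF homog_letter(1) homog_letter(1)] homog_mag_mult[OF homog_letter(2,1)]
  by simp_all

lemma homog_E_generators:
  "r \<in> lin_rels sg sm \<union> glie_rels \<union> E_rels br act \<Longrightarrow> \<exists>k. r \<in> homog k"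
proof -
  have "lin_rels sg sm \<union> E_rels br act \<subseteq> homog 0 \<union> homog 1"
    unfolding lin_rels_def E_rels_def
    by (auto simp: homog_diff homog_smult homog_letter[simplified] homog_letter_mult[simplified])
  moreover have "glie_rels \<subseteq> (\<Union>k. homog k)"
    unfolding glie_rels_eq by (auto intro: homog_antisym_rel homog_jacobi_rel homog_basis_el)
  ultimately show "r \<in> lin_rels sg sm \<union> glie_rels \<union> E_rels br act \<Longrightarrow> \<exists>k. r \<in> homog k"
    by blast
qed

section \<open>Evaluation in a Lie algebra of \<open>LM\<close>\<close>

fun tree_eval0 :: "('g \<Rightarrow> 'g \<Rightarrow> 'g) \<Rightarrow> ('g::zero + 'm) ftree \<Rightarrow> 'g" where
  "tree_eval0 br (Leaf (Inl x)) = x"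
| "tree_eval0 br (Leaf (Inr m)) = 0"
| "tree_eval0 br (Node s u) = br (tree_eval0 br s) (tree_eval0 br u)"

text \<open>Trees of degree 1 are evaluated in the semidirect product \<open>g\<^sub>0 \<ltimes> g\<^sub>1\<close>, where
  \<open>[m, y] = act m y\<close> and \<open>[y, m] = - act m y\<close>.\<close>

fun tree_eval1 :: "('g \<Rightarrow> 'g \<Rightarrow> 'g) \<Rightarrow> ('m \<Rightarrow> 'g \<Rightarrow> 'm) \<Rightarrow> ('g::zero + 'm::ab_group_add) ftree \<Rightarrow> 'm" where
  "tree_eval1 br act (Leaf (Inl x)) = 0"
| "tree_eval1 br act (Leaf (Inr m)) = m"
| "tree_eval1 br act (Node s u) =
     act (tree_eval1 br act s) (tree_eval0 br u) - act (tree_eval1 br act u) (tree_eval0 br s)"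

locale LM_lie =
  fixes sg :: "'k::field_char_0 \<Rightarrow> 'g::ab_group_add \<Rightarrow> 'g"
    and sm :: "'k \<Rightarrow> 'm::ab_group_add \<Rightarrow> 'm"
    and br :: "'g \<Rightarrow> 'g \<Rightarrow> 'g"
    and act :: "'m \<Rightarrow> 'g \<Rightarrow> 'm"
    and d :: "'m \<Rightarrow> 'g"
  assumes LM: "LM_lie_algebra sg sm br act d"
begin

sublocale g0: vector_space sg
  using LM by (simp add: LM_lie_algebra_def)

sublocale g1: vector_space sm
  using LM by (simp add: LM_lie_algebra_def)

lemma br_hom: "module_hom sg sg (br x)" "module_hom sg sg (\<lambda>x. br x y)"
  and act_hom: "module_hom sg sm (act m)" "module_hom sm sm (\<lambda>m. act m y)"
  and d_hom: "module_hom sm sg d"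
  using LM by (simp_all add: LM_lie_algebra_def bilinear_map_def module_hom_iff_linear)

lemmas br_add_right = module_hom.add[OF br_hom(1)]
  and br_add_left = module_hom.add[OF br_hom(2)]
  and br_scale_right = module_hom.scale[OF br_hom(1)]
  and br_scale_left = module_hom.scale[OF br_hom(2)]
  and br_zero_right [simp] = module_hom.zero[OF br_hom(1)]
  and br_zero_left [simp] = module_hom.zero[OF br_hom(2)]
  and act_add_right = module_hom.add[OF act_hom(1)]
  and act_add_left = module_hom.add[OF act_hom(2)]
  and act_scale_right = module_hom.scale[OF act_hom(1)]
  and act_scale_left = module_hom.scale[OF act_hom(2)]
  and act_diff_left = module_hom.diff[OF act_hom(2)]
  and act_zero_right [simp] = module_hom.zero[OF act_hom(1)]
  and act_zero_left [simp] = module_hom.zero[OF act_hom(2)]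
  and br_neg_right = module_hom.neg[OF br_hom(1)]
  and d_add = module_hom.add[OF d_hom]
  and d_scale = module_hom.scale[OF d_hom]

lemma br_self: "br x x = 0"
  and br_jacobi: "br x (br y z) + br y (br z x) + br z (br x y) = 0"
  and act_br: "act m (br x y) = act (act m x) y - act (act m y) x"
  and d_act: "d (act m x) = br (d m) x"
  using LM by (simp_all add: LM_lie_algebra_def)

lemma br_antisym: "br y x = - br x y"
proof -
  have "br (x + y) (x + y) = 0" by (rule br_self)
  then have "br y x + br x y = 0"
    unfolding br_add_left br_add_right by (simp add: br_self)
  then show ?thesis by (simp add: eq_neg_iff_add_eq_0)
qed

abbreviation eval0 :: "(('g + 'm) ftree \<Rightarrow>\<^sub>0 'k) \<Rightarrow> 'g" where
  "eval0 \<equiv> lin_ext sg (tree_eval0 br)"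

abbreviation eval1 :: "(('g + 'm) ftree \<Rightarrow>\<^sub>0 'k) \<Rightarrow> 'm" where
  "eval1 \<equiv> lin_ext sm (tree_eval1 br act)"

lemma eval0_hom: "module_hom mag_smult sg eval0"
  and eval1_hom: "module_hom mag_smult sm eval1"
  by (intro module.module_hom_lin_ext g0.module_axioms g1.module_axioms)+

lemmas eval0_add = module_hom.add[OF eval0_hom]
  and eval0_diff = module_hom.diff[OF eval0_hom]
  and eval0_smult = module_hom.scale[OF eval0_hom]
  and eval0_zero [simp] = module_hom.zero[OF eval0_hom]
  and eval1_add = module_hom.add[OF eval1_hom]
  and eval1_diff = module_hom.diff[OF eval1_hom]
  and eval1_smult = module_hom.scale[OF eval1_hom]
  and eval1_zero [simp] = module_hom.zero[OF eval1_hom]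

lemma eval0_basis_el [simp]: "eval0 (basis_el t) = tree_eval0 br t"
  and eval1_basis_el [simp]: "eval1 (basis_el t) = tree_eval1 br act t"
  by (intro module.lin_ext_basis_el g0.module_axioms g1.module_axioms)+

lemma tree_eval0_tdeg: "tdeg t \<noteq> 0 \<Longrightarrow> tree_eval0 br t = 0"
proof (induction t)
  case (Leaf x)
  then show ?case by (cases x) auto
qed auto

lemma tree_eval1_tdeg: "tdeg t \<noteq> 1 \<Longrightarrow> tree_eval1 br act t = 0"
proof (induction t)
  case (Leaf x)
  then show ?case by (cases x) auto
next
  case (Node s u)
  then show ?case by (cases "tdeg s = 1"; cases "tdeg u = 1") (auto simp: tree_eval0_tdeg)
qed

lemma eval0_mag_mult: "eval0 (mag_mult p q) = br (eval0 p) (eval0 q)"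
proof (induction p rule: poly_mapping_induct)
  case (single s c)
  show ?case
  proof (induction q rule: poly_mapping_induct)
    case (single u e)
    show ?case
      by (simp add: single_eq_mag_smult_basis_el mag_mult_smult_left mag_mult_smult_right
          mag_mult_basis_el eval0_smult br_scale_left br_scale_right mult.commute)
  qed (simp_all add: mag_mult_add_right eval0_add br_add_right)
qed (simp_all add: mag_mult_add_left eval0_add br_add_left)

lemma eval1_mag_mult: "eval1 (mag_mult p q) = act (eval1 p) (eval0 q) - act (eval1 q) (eval0 p)"
proof (induction p rule: poly_mapping_induct)
  case (single s c)
  show ?case
  proof (induction q rule: poly_mapping_induct)
    case (single u e)
    show ?case
      by (simp add: single_eq_mag_smult_basis_el mag_mult_smult_left mag_mult_smult_right
          mag_mult_basis_el eval0_smult eval1_smult act_scale_left act_scale_right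
          g1.scale_right_diff_distrib mult.commute)
  qed (simp_all add: mag_mult_add_right eval0_add eval1_add act_add_left act_add_right)
qed (simp_all add: mag_mult_add_left eval0_add eval1_add act_add_left act_add_right algebra_simps)

lemma br_jacobi_leibniz: "br x (br y z) = br (br x y) z + br y (br x z)"
proof -
  have "br x (br y z) - (br (br x y) z + br y (br x z)) =
      br x (br y z) + br y (br z x) + br z (br x y)"
    by (simp add: br_antisym[of "br x y" z] br_antisym[of x z] br_neg_right)
  then show ?thesis using br_jacobi[of x y z] by simp
qed

lemma eval_antisym_rel_basis_el:
  "eval0 (antisym_rel (tdeg s) (tdeg u) (basis_el s) (basis_el u)) = 0 \<and>
   eval1 (antisym_rel (tdeg s) (tdeg u) (basis_el s) (basis_el u)) = 0"
proof (cases "even (tdeg s * tdeg u)")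
  case True
  then show ?thesis
    by (simp add: antisym_rel_def eval0_add eval1_add eval0_smult eval1_smult eval0_mag_mult
        eval1_mag_mult br_antisym[of "tree_eval0 br u"])
next
  case False
  then have "tree_eval0 br s = 0" "tree_eval0 br u = 0"
    by (auto intro!: tree_eval0_tdeg simp: odd_pos)
  then show ?thesis
    by (simp add: antisym_rel_def eval0_add eval1_add eval0_smult eval1_smult eval0_mag_mult
        eval1_mag_mult)
qed

lemma eval_jacobi_rel_basis_el:
  "eval0 (jacobi_rel (tdeg s) (tdeg t) (basis_el s) (basis_el t) (basis_el u)) = 0 \<and>
   eval1 (jacobi_rel (tdeg s) (tdeg t) (basis_el s) (basis_el t) (basis_el u)) = 0"
proof (cases "even (tdeg s * tdeg t)")
  case True
  then show ?thesis
    unfolding jacobi_rel_def eval0_diff eval1_diff eval0_smult eval1_smult eval0_mag_mult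
      eval1_mag_mult
    by (simp add: br_jacobi_leibniz[of "tree_eval0 br s"] act_br act_diff_left algebra_simps)
next
  case False
  then have "tree_eval0 br s = 0" "tree_eval0 br t = 0"
    by (auto intro!: tree_eval0_tdeg simp: odd_pos)
  then show ?thesis
    by (simp add: jacobi_rel_def eval0_diff eval1_diff eval0_smult eval1_smult eval0_mag_mult
        eval1_mag_mult)
qed

lemma eval_E_ideal: "a \<in> E_ideal sg sm br act \<Longrightarrow> eval0 a = 0 \<and> eval1 a = 0"
  unfolding E_ideal_def
proof (induction rule: ideal_gen.induct)
  case (gen r)
  then show ?case
    using eval_antisym_rel_basis_el eval_jacobi_rel_basis_el
    by (auto simp: lin_rels_def glie_rels_eq E_rels_def eval0_diff eval1_diff eval0_smult
        eval1_smult eval0_mag_mult eval1_mag_mult)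
qed (auto simp: eval0_add eval1_add eval0_smult eval1_smult eval0_mag_mult eval1_mag_mult)

lemma Inl_in_E_ideal_imp_zero: "basis_el (Leaf (Inl x)) \<in> E_ideal sg sm br act \<Longrightarrow> x = 0"
  and Inr_in_E_ideal_imp_zero: "basis_el (Leaf (Inr m)) \<in> E_ideal sg sm br act \<Longrightarrow> m = 0"
  using eval_E_ideal by fastforce+

lemma E_ideal_generator:
  "r \<in> lin_rels sg sm \<union> glie_rels \<union> E_rels br act \<Longrightarrow> r \<in> E_ideal sg sm br act"
  unfolding E_ideal_def by (rule ideal_gen.gen)

lemma Inl_add_rel:
    "basis_el (Leaf (Inl (x + y))) - basis_el (Leaf (Inl x)) - basis_el (Leaf (Inl y))
       \<in> E_ideal sg sm br act"
  and Inl_scale_rel: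
    "basis_el (Leaf (Inl (sg c x))) - mag_smult c (basis_el (Leaf (Inl x))) \<in> E_ideal sg sm br act"
  and Inr_add_rel:
    "basis_el (Leaf (Inr (m + n))) - basis_el (Leaf (Inr m)) - basis_el (Leaf (Inr n))
       \<in> E_ideal sg sm br act"
  and Inr_scale_rel:
    "basis_el (Leaf (Inr (sm c m))) - mag_smult c (basis_el (Leaf (Inr m))) \<in> E_ideal sg sm br act"
  and Inl_bracket_rel:
    "mag_mult (basis_el (Leaf (Inl x))) (basis_el (Leaf (Inl y))) - basis_el (Leaf (Inl (br x y)))
       \<in> E_ideal sg sm br act"
  and Inr_action_rel:
    "mag_mult (basis_el (Leaf (Inr m))) (basis_el (Leaf (Inl y))) - basis_el (Leaf (Inr (act m y)))
       \<in> E_ideal sg sm br act"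
  by (intro E_ideal_generator; auto simp: lin_rels_def E_rels_def)+

lemma E_ideal_diff:
  "a \<in> E_ideal sg sm br act \<Longrightarrow> b \<in> E_ideal sg sm br act \<Longrightarrow> a - b \<in> E_ideal sg sm br act"
  unfolding E_ideal_def by (rule ideal_gen_diff)

lemma E_ideal_trans:
  "a - b \<in> E_ideal sg sm br act \<Longrightarrow> b - c \<in> E_ideal sg sm br act \<Longrightarrow> a - c \<in> E_ideal sg sm br act"
  unfolding E_ideal_def using ideal_gen.add by fastforce

lemma E_ideal_mag_mult_cong:
  "a - a' \<in> E_ideal sg sm br act \<Longrightarrow> b - b' \<in> E_ideal sg sm br act
    \<Longrightarrow> mag_mult a b - mag_mult a' b' \<in> E_ideal sg sm br act"
  unfolding E_ideal_def by (rule ideal_gen_mag_mult_cong)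

lemma tree_congr_Inl:
  "tdeg t = 0 \<Longrightarrow> basis_el t - basis_el (Leaf (Inl (tree_eval0 br t))) \<in> E_ideal sg sm br act"
proof (induction t)
  case (Leaf x)
  then show ?case by (cases x) (simp_all add: E_ideal_def ideal_gen.zero)
next
  case (Node s u)
  then have "basis_el (Node s u)
      - mag_mult (basis_el (Leaf (Inl (tree_eval0 br s)))) (basis_el (Leaf (Inl (tree_eval0 br u))))
      \<in> E_ideal sg sm br act"
    using E_ideal_mag_mult_cong by (simp flip: mag_mult_basis_el)
  then show ?case by (simp add: E_ideal_trans[OF _ Inl_bracket_rel])
qed

lemma Node_congr_Inr:
  assumes "tdeg u = 0" "basis_el s - basis_el (Leaf (Inr m)) \<in> E_ideal sg sm br act"
  shows "basis_el (Node s u) - basis_el (Leaf (Inr (act m (tree_eval0 br u))))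
    \<in> E_ideal sg sm br act"
  using E_ideal_trans[OF E_ideal_mag_mult_cong[OF assms(2) tree_congr_Inl[OF assms(1)]]
      Inr_action_rel]
  by (simp add: mag_mult_basis_el)

lemma tree_congr_Inr:
  "tdeg t = 1 \<Longrightarrow> basis_el t - basis_el (Leaf (Inr (tree_eval1 br act t))) \<in> E_ideal sg sm br act"
proof (induction t)
  case (Leaf x)
  then show ?case by (cases x) (simp_all add: E_ideal_def ideal_gen.zero)
next
  case (Node s u)
  then consider "tdeg s = 1" "tdeg u = 0" | "tdeg s = 0" "tdeg u = 1"
    using add_is_1 by auto
  then show ?case
  proof cases
    case 1
    then show ?thesis using Node.IH(1) by (simp add: Node_congr_Inr tree_eval1_tdeg)
  next
    case 2
    define y where "y = act (tree_eval1 br act u) (tree_eval0 br s)"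
    have us: "basis_el (Node u s) - basis_el (Leaf (Inr y)) \<in> E_ideal sg sm br act"
      using 2 Node.IH(2) by (simp add: Node_congr_Inr y_def)
    have "antisym_rel (tdeg s) (tdeg u) (basis_el s) (basis_el u) \<in> E_ideal sg sm br act"
      by (rule E_ideal_generator) (auto simp: glie_rels_eq)
    then have anti: "basis_el (Node s u) + basis_el (Node u s) \<in> E_ideal sg sm br act"
      using 2 by (simp add: antisym_rel_def mag_mult_basis_el)
    have neg: "basis_el (Leaf (Inr (- y))) + basis_el (Leaf (Inr y)) \<in> E_ideal sg sm br act"
      using Inr_scale_rel[of "-1" y] by simp
    have "(basis_el (Node s u) + basis_el (Node u s))
        - (basis_el (Node u s) - basis_el (Leaf (Inr y)))
        - (basis_el (Leaf (Inr (- y))) + basis_el (Leaf (Inr y))) \<in> E_ideal sg sm br act"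
      using E_ideal_diff[OF E_ideal_diff[OF anti us] neg] .
    then show ?thesis using 2 by (simp add: y_def tree_eval1_tdeg)
  qed
qed

lemma homog_0_congr_Inl:
  "a \<in> homog 0 \<Longrightarrow> \<exists>x. a - basis_el (Leaf (Inl x)) \<in> E_ideal sg sm br act"
  unfolding E_ideal_def
  by (rule ideal_gen_representative[OF Inl_add_rel[unfolded E_ideal_def]
        Inl_scale_rel[unfolded E_ideal_def]])
     (use tree_congr_Inl[unfolded E_ideal_def] in \<open>auto simp: homog_def\<close>)

lemma homog_1_congr_Inr:
  "a \<in> homog 1 \<Longrightarrow> \<exists>m. a - basis_el (Leaf (Inr m)) \<in> E_ideal sg sm br act"
  unfolding E_ideal_def
  by (rule ideal_gen_representative[OF Inr_add_rel[unfolded E_ideal_def]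
        Inr_scale_rel[unfolded E_ideal_def]])
     (use tree_congr_Inr[unfolded E_ideal_def] in \<open>auto simp: homog_def\<close>)

lemma E_ideal_zero: "0 \<in> E_ideal sg sm br act"
  unfolding E_ideal_def by (rule ideal_gen.zero)

lemma E_ideal_hpart: "a \<in> E_ideal sg sm br act \<Longrightarrow> hpart n a \<in> E_ideal sg sm br act"
  unfolding E_ideal_def
  by (rule ideal_gen_hpart[of "lin_rels sg sm \<union> glie_rels \<union> E_rels br act",
        OF homog_E_generators])

lemma E_ideal_grading_inv:
  "a \<in> E_ideal sg sm br act \<Longrightarrow> grading_inv a \<in> E_ideal sg sm br act"
  unfolding E_ideal_def
  by (rule ideal_gen_grading_inv[of "lin_rels sg sm \<union> glie_rels \<union> E_rels br act",
        OF homog_E_generators])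

lemma Dmag_E_generator:
  assumes "r \<in> lin_rels sg sm \<union> glie_rels \<union> E_rels br act"
  shows "Dmag d r \<in> E_ideal sg sm br act"
  using assms
proof (elim UnE)
  assume "r \<in> lin_rels sg sm"
  then show ?thesis
    using Inl_add_rel[of "d _" "d _"] Inl_scale_rel[of _ "d _"]
    by (auto simp: lin_rels_def Dmag_diff Dmag_smult d_add d_scale E_ideal_zero)
next
  assume "r \<in> glie_rels"
  then show ?thesis unfolding E_ideal_def by (rule Dmag_glie_rels[rotated]) blast
next
  assume "r \<in> E_rels br act"
  then show ?thesis
    using Inl_bracket_rel[of "d _"]
    by (auto simp: E_rels_def Dmag_diff Dmag_mag_mult d_act E_ideal_zero)
qed

lemma Dmag_E_ideal: "a \<in> E_ideal sg sm br act \<Longrightarrow> Dmag d a \<in> E_ideal sg sm br act"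
  unfolding E_ideal_def
proof (induction rule: ideal_gen.induct)
  case (gen r)
  then show ?case using Dmag_E_generator unfolding E_ideal_def by blast
next
  case (left a p)
  then show ?case by (simp add: Dmag_mag_mult ideal_gen.add ideal_gen.left ideal_gen.right)
next
  case (right a p)
  moreover have "grading_inv a \<in> ideal_gen (lin_rels sg sm \<union> glie_rels \<union> E_rels br act)"
    using E_ideal_grading_inv right(1) unfolding E_ideal_def by blast
  ultimately show ?case by (simp add: Dmag_mag_mult ideal_gen.add ideal_gen.left ideal_gen.right)
qed (simp_all add: Dmag_add Dmag_smult ideal_gen.intros)

end

theorem mainTheorem6:
  fixes sg :: "'k::field_char_0 \<Rightarrow> 'g::ab_group_add \<Rightarrow> 'g"
    and sm :: "'k \<Rightarrow> 'm::ab_group_add \<Rightarrow> 'm"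
    and br :: "'g \<Rightarrow> 'g \<Rightarrow> 'g"
    and act :: "'m \<Rightarrow> 'g \<Rightarrow> 'm"
    and d :: "'m \<Rightarrow> 'g"
  assumes "LM_lie_algebra sg sm br act d"
  shows
    \<comment> \<open>E g is a differential graded Lie algebra: the ideal is graded, stable under D, and D^2 = 0 mod it\<close>
    "(\<forall>a \<in> E_ideal sg sm br act. \<forall>n. hpart n a \<in> E_ideal sg sm br act)
   \<and> (\<forall>a \<in> E_ideal sg sm br act. Dmag d a \<in> E_ideal sg sm br act)
   \<and> (\<forall>a :: ('g + 'm) ftree \<Rightarrow>\<^sub>0 'k. Dmag d (Dmag d a) \<in> E_ideal sg sm br act)
    \<comment> \<open>degree 0: g0 -> (E g)_0 is a linear bijection preserving brackets\<close>
   \<and> (\<forall>x y. basis_el (Leaf (Inl (x + y))) - basis_el (Leaf (Inl x)) - basis_el (Leaf (Inl y))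
              \<in> E_ideal sg sm br act)
   \<and> (\<forall>c x. basis_el (Leaf (Inl (sg c x))) - mag_smult c (basis_el (Leaf (Inl x)))
              \<in> E_ideal sg sm br act)
   \<and> (\<forall>x. basis_el (Leaf (Inl x)) \<in> E_ideal sg sm br act \<longrightarrow> x = 0)
   \<and> (\<forall>a \<in> homog 0. \<exists>x. a - basis_el (Leaf (Inl x)) \<in> E_ideal sg sm br act)
   \<and> (\<forall>x y. mag_mult (basis_el (Leaf (Inl x))) (basis_el (Leaf (Inl y))) - basis_el (Leaf (Inl (br x y)))
              \<in> E_ideal sg sm br act)
    \<comment> \<open>degree 1: g1 -> (E g)_1 is a linear bijection compatible with the action and with d\<close>
   \<and> (\<forall>m n. basis_el (Leaf (Inr (m + n))) - basis_el (Leaf (Inr m)) - basis_el (Leaf (Inr n))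
              \<in> E_ideal sg sm br act)
   \<and> (\<forall>c m. basis_el (Leaf (Inr (sm c m))) - mag_smult c (basis_el (Leaf (Inr m)))
              \<in> E_ideal sg sm br act)
   \<and> (\<forall>m. basis_el (Leaf (Inr m)) \<in> E_ideal sg sm br act \<longrightarrow> m = 0)
   \<and> (\<forall>a \<in> homog 1. \<exists>m. a - basis_el (Leaf (Inr m)) \<in> E_ideal sg sm br act)
   \<and> (\<forall>m y. mag_mult (basis_el (Leaf (Inr m))) (basis_el (Leaf (Inl y))) - basis_el (Leaf (Inr (act m y)))
              \<in> E_ideal sg sm br act)
   \<and> (\<forall>m. Dmag d (basis_el (Leaf (Inr m)) :: ('g + 'm) ftree \<Rightarrow>\<^sub>0 'k) = basis_el (Leaf (Inl (d m))))"
proof -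
  interpret LM_lie sg sm br act d
    using assms by unfold_locales
  show ?thesis
    using E_ideal_hpart Dmag_E_ideal Inl_add_rel Inl_scale_rel Inl_in_E_ideal_imp_zero
      homog_0_congr_Inl Inl_bracket_rel Inr_add_rel Inr_scale_rel Inr_in_E_ideal_imp_zero
      homog_1_congr_Inr Inr_action_rel
    by (simp add: Dmag_Dmag E_ideal_zero)
qed

end
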